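(* If there exists a skew Room frame of type $t^u$, then there exists a $[2,2]$-GDC$(6)$ of type $(6t)^u$ with size $6t^2u(u-1)$.
   Context: Let $S$ be a finite set with a partition $\{S_1,\dots,S_n\}$. An $\{S_1,\dots,S_n\}$-Room frame is an $|S|\times|S|$ array $F$ indexed by $S$ such that: (1) every cell is empty or contains an unordered pair of symbols of $S$; (2) the subarrays $S_i\times S_i$ are empty; (3) each symbol $x\notin S_i$ occurs exactly once in row $s$ and exactly once in column $s$ for every $s\in S_i$; (4) the pairs occurring in $F$ are exactly those $\{s,t\}$ with $(s,t)\in (S\times S)\setminus\bigcup_i(S_i\times S_i)$. It has type $t^u$ if there are $u$ parts, each of size $t$. It is skew if whenever cell $(i,j)$ is filled, cell $(j,i)$ is empty. Ternary codes: a ternary code on a finite set $X$ is a subset $\mathcal C\subseteq\mathbb Z_3^X$; Hamming distance between $u,v$ is $|\{x:u_x\neq v_x\}|$; $u$ has composition $[w_1,w_2]$ if exactly $w_1$ coordinates equal $1$ and exactly $w_2$ equal $2$. A $[w_1,w_2]$-GDC$(d)$ is a triple $(X,\mathcal G,\mathcal C)$ where $\mathcal G$ is a partition of $X$ into groups and $\mathcal C\subseteq\mathbb Z_3^X$ is such that every codeword has composition $[w_1,w_2]$, any two distinct codewords have Hamming distance at least $d$, and every codeword has at most one nonzero coordinate in each group. Its type is the multiset of group sizes, written in exponential notation ($g_1^{t_1}\cdots g_s^{t_s}$ means $t_i$ groups of size $g_i$); its size is $|\mathcal C|$. *)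

theory Defs
  imports Main "HOL-Library.Disjoint_Sets"
begin

text \<open>Only cells indexed by S x S matter.\<close>
definition room_frame :: "'a set \<Rightarrow> 'a set set \<Rightarrow> ('a \<Rightarrow> 'a \<Rightarrow> 'a set) \<Rightarrow> bool" where
  "room_frame S P F \<longleftrightarrow>
     finite S \<and> partition_on S P \<and>
     (\<forall>s\<in>S. \<forall>t\<in>S. F s t = {} \<or> (F s t \<subseteq> S \<and> card (F s t) = 2)) \<and>
     (\<forall>p\<in>P. \<forall>s\<in>p. \<forall>t\<in>p. F s t = {}) \<and>
     (\<forall>p\<in>P. \<forall>s\<in>p. \<forall>x\<in>S - p.
         card {t\<in>S. x \<in> F s t} = 1 \<and> card {t\<in>S. x \<in> F t s} = 1) \<and>
     {F s t | s t. s \<in> S \<and> t \<in> S \<and> F s t \<noteq> {}} =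
     {{s, t} | s t. s \<in> S \<and> t \<in> S \<and> \<not> (\<exists>p\<in>P. s \<in> p \<and> t \<in> p)}"

definition skew_frame :: "'a set \<Rightarrow> ('a \<Rightarrow> 'a \<Rightarrow> 'a set) \<Rightarrow> bool" where
  "skew_frame S F \<longleftrightarrow> (\<forall>s\<in>S. \<forall>t\<in>S. F s t \<noteq> {} \<longrightarrow> F t s = {})"

definition uniform_type :: "'a set set \<Rightarrow> nat \<Rightarrow> nat \<Rightarrow> bool" where
  "uniform_type P g u \<longleftrightarrow> card P = u \<and> (\<forall>p\<in>P. card p = g)"

text \<open>Elements of Z_3^X represented as functions with values in {0,1,2}
  (standing for Z_3), equal to 0 outside X.\<close>
definition ternary_word :: "'a set \<Rightarrow> ('a \<Rightarrow> nat) \<Rightarrow> bool" where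
  "ternary_word X c \<longleftrightarrow> (\<forall>x. c x < 3) \<and> (\<forall>x. x \<notin> X \<longrightarrow> c x = 0)"

definition hamming :: "'a set \<Rightarrow> ('a \<Rightarrow> nat) \<Rightarrow> ('a \<Rightarrow> nat) \<Rightarrow> nat" where
  "hamming X u v = card {x\<in>X. u x \<noteq> v x}"

definition has_composition :: "'a set \<Rightarrow> ('a \<Rightarrow> nat) \<Rightarrow> nat \<Rightarrow> nat \<Rightarrow> bool" where
  "has_composition X c w1 w2 \<longleftrightarrow>
     card {x\<in>X. c x = 1} = w1 \<and> card {x\<in>X. c x = 2} = w2"

definition gdc :: "nat \<Rightarrow> nat \<Rightarrow> nat \<Rightarrow> 'a set \<Rightarrow> 'a set set \<Rightarrow> ('a \<Rightarrow> nat) set \<Rightarrow> bool" where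
  "gdc w1 w2 d X G C \<longleftrightarrow>
     finite X \<and> partition_on X G \<and>
     (\<forall>c\<in>C. ternary_word X c \<and> has_composition X c w1 w2) \<and>
     (\<forall>c\<in>C. \<forall>c'\<in>C. c \<noteq> c' \<longrightarrow> hamming X c c' \<ge> d) \<and>
     (\<forall>c\<in>C. \<forall>g\<in>G. card {x\<in>g. c x \<noteq> 0} \<le> 1)"

end

(*
  Points are triples (x, v, w) with x a symbol of the frame, v \<in> Z_3 a level and w \<in> Z_2;
  the groups are the sets S_i \<times> Z_3 \<times> Z_2.  A filled cell (s, t) with entry {a, b}, a level u and
  h, g \<in> Z_2 give the codeword supported on (s, u, h), (t, u, 1 - h), (a, u + 1, g), (b, u + 1, g),
  with values 2, 2, 1, 1 if h = g and 1, 1, 2, 2 otherwise.  A skew frame of type t^u has exactly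
  t^2 u (u - 1) / 2 filled cells, whence 6 t^2 u (u - 1) codewords.

  Two words of weight 4 are at distance at least 6 iff they share at most one point, or two points
  on both of which they differ.  Words on adjacent levels meet in at most one point, because the
  two head points carry different w.  On a common level this follows from the frame axioms: no two
  cells have the same entry, a symbol occurs only once in each row and each column, skewness
  forbids the transposed cell, and the entries of a cell avoid the parts of its row and column.
  The last fact is a counting argument: by skewness the filled cells are exactly half of the
  pairs from different parts, which leaves no room in a row for symbols of its own part.
*)

theory Submission
  imports Defs "HOL-Library.Countable"
begin

lemma card_le_twice_card_doubletons:
  assumes "finite R"
  shows "card R \<le> 2 * card ((\<lambda>(x, y). {x, y}) ` R)"
proof -
  let ?E = "(\<lambda>(x, y). {x, y}) ` R"
  let ?fibre = "\<lambda>e. R \<inter> {(x, y). {x, y} = e}"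
  have "R \<subseteq> (\<Union>e\<in>?E. ?fibre e)"
    by (auto simp: image_iff)
  then have "card R \<le> card (\<Union>e\<in>?E. ?fibre e)"
    by (rule card_mono[rotated]) (simp add: assms)
  also have "\<dots> \<le> (\<Sum>e\<in>?E. card (?fibre e))"
    by (rule card_UN_le) (simp add: assms)
  also have "\<dots> \<le> (\<Sum>e\<in>?E. 2)"
  proof (rule sum_mono)
    fix e assume "e \<in> ?E"
    then obtain x y where "e = {x, y}" by auto
    then have "card (?fibre e) \<le> card {(x, y), (y, x)}"
      by (intro card_mono) (auto simp: doubleton_eq_iff)
    also have "\<dots> \<le> 2"
      by (rule card_insert_le_m1) simp_all
    finally show "card (?fibre e) \<le> 2" .
  qed
  finally show ?thesis by simp
qed

lemma card_2_eq_doubleton: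
  assumes "card A = 2" "x \<in> A" "y \<in> A" "x \<noteq> y"
  shows "A = {x, y}"
proof -
  obtain a b where "A = {a, b}"
    using assms(1) by (auto simp: card_2_iff)
  then show ?thesis
    using assms(2-4) by auto
qed

lemma card_le_one_iff_all_eq: "card A \<le> 1 \<longleftrightarrow> infinite A \<or> (\<forall>x\<in>A. \<forall>y\<in>A. x = y)"
  by (cases "finite A") (auto simp: card_le_Suc0_iff_eq)

lemma card_le_one_if_subset_singleton: "A \<subseteq> {a} \<Longrightarrow> card A \<le> 1"
  unfolding card_le_one_iff_all_eq by blast

lemma partition_on_Times:
  assumes "partition_on A P" "B \<noteq> {}"
  shows "partition_on (A \<times> B) ((\<lambda>p. p \<times> B) ` P)"
proof (rule partition_onI)
  show "\<Union> ((\<lambda>p. p \<times> B) ` P) = A \<times> B"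
    using partition_onD1[OF assms(1)] by blast
  show "disjnt X Y" if XY: "X \<in> (\<lambda>p. p \<times> B) ` P" "Y \<in> (\<lambda>p. p \<times> B) ` P" "X \<noteq> Y" for X Y
  proof -
    obtain p q where "p \<in> P" "q \<in> P" "X = p \<times> B" "Y = q \<times> B"
      using XY(1,2) by blast
    moreover from this have "p \<noteq> q"
      using XY(3) by blast
    ultimately show ?thesis
      using disjointD[OF partition_onD2[OF assms(1)]] by (auto simp: disjnt_def)
  qed
  show "{} \<notin> (\<lambda>p. p \<times> B) ` P"
    using partition_onD3[OF assms(1)] assms(2) unfolding image_iff by (metis Times_empty)
qed

lemma uniform_type_Times:
  assumes "uniform_type P n m" "partition_on S P" "finite B" "B \<noteq> {}"
  shows "uniform_type ((\<lambda>p. p \<times> B) ` P) (n * card B) m"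
proof -
  have "inj_on (\<lambda>p. p \<times> B) P"
    using partition_onD3[OF assms(2)] assms(4) by (auto intro!: inj_onI simp: times_eq_iff)
  then show ?thesis
    using assms(1) by (simp add: uniform_type_def card_image card_cartesian_product)
qed

lemma Suc_mod_3_neq: "u < 3 \<Longrightarrow> Suc u mod 3 \<noteq> u"
  by presburger

section \<open>Skew Room frames\<close>

definition same_part :: "'a set set \<Rightarrow> 'a \<Rightarrow> 'a \<Rightarrow> bool" where
  "same_part P x y \<longleftrightarrow> (\<exists>p\<in>P. x \<in> p \<and> y \<in> p)"

lemma same_part_commute: "same_part P x y = same_part P y x"
  by (auto simp: same_part_def)

lemma same_part_refl: "partition_on S P \<Longrightarrow> x \<in> S \<Longrightarrow> same_part P x x"
  by (auto simp: same_part_def dest: partition_onD1)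

lemma same_part_iff_mem:
  assumes "partition_on S P" "p \<in> P" "x \<in> p"
  shows "same_part P x y \<longleftrightarrow> y \<in> p"
  using partition_onD2[OF assms(1)] assms(2,3)
  by (auto simp: same_part_def disjoint_def)

definition filled_cells :: "'a set \<Rightarrow> ('a \<Rightarrow> 'a \<Rightarrow> 'a set) \<Rightarrow> ('a \<times> 'a) set" where
  "filled_cells S F = {(s, t) \<in> S \<times> S. F s t \<noteq> {}}"

definition cross_pairs :: "'a set \<Rightarrow> 'a set set \<Rightarrow> ('a \<times> 'a) set" where
  "cross_pairs S P = {(s, t) \<in> S \<times> S. \<not> same_part P s t}"

lemma room_frameD:
  assumes "room_frame S P F"
  shows room_frame_finite: "finite S"
    and room_frame_partition: "partition_on S P"
    and room_frame_cell: "\<And>s t. s \<in> S \<Longrightarrow> t \<in> S \<Longrightarrow> F s t \<noteq> {} \<Longrightarrow> F s t \<subseteq> S \<and> card (F s t) = 2"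
    and room_frame_same_part_empty: "\<And>s t. same_part P s t \<Longrightarrow> F s t = {}"
    and room_frame_row: "\<And>p s x. p \<in> P \<Longrightarrow> s \<in> p \<Longrightarrow> x \<in> S - p \<Longrightarrow> card {t \<in> S. x \<in> F s t} = 1"
    and room_frame_column: "\<And>p s x. p \<in> P \<Longrightarrow> s \<in> p \<Longrightarrow> x \<in> S - p \<Longrightarrow> card {t \<in> S. x \<in> F t s} = 1"
    and room_frame_contents: "(\<lambda>(s, t). F s t) ` filled_cells S F = (\<lambda>(s, t). {s, t}) ` cross_pairs S P"
proof -
  from assms obtain fin: "finite S" and part: "partition_on S P"
    and cell: "\<forall>s\<in>S. \<forall>t\<in>S. F s t = {} \<or> (F s t \<subseteq> S \<and> card (F s t) = 2)"
    and empty: "\<forall>p\<in>P. \<forall>s\<in>p. \<forall>t\<in>p. F s t = {}"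
    and count: "\<forall>p\<in>P. \<forall>s\<in>p. \<forall>x\<in>S - p. card {t\<in>S. x \<in> F s t} = 1 \<and> card {t\<in>S. x \<in> F t s} = 1"
    and pairs: "{F s t | s t. s \<in> S \<and> t \<in> S \<and> F s t \<noteq> {}} =
      {{s, t} | s t. s \<in> S \<and> t \<in> S \<and> \<not> (\<exists>p\<in>P. s \<in> p \<and> t \<in> p)}"
    unfolding room_frame_def by (elim conjE) (rule that)
  show "finite S" "partition_on S P" by (fact fin part)+
  show "\<And>s t. s \<in> S \<Longrightarrow> t \<in> S \<Longrightarrow> F s t \<noteq> {} \<Longrightarrow> F s t \<subseteq> S \<and> card (F s t) = 2"
    using cell by blast
  show "\<And>s t. same_part P s t \<Longrightarrow> F s t = {}"
    using empty by (auto simp: same_part_def)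
  show "\<And>p s x. p \<in> P \<Longrightarrow> s \<in> p \<Longrightarrow> x \<in> S - p \<Longrightarrow> card {t \<in> S. x \<in> F s t} = 1"
    "\<And>p s x. p \<in> P \<Longrightarrow> s \<in> p \<Longrightarrow> x \<in> S - p \<Longrightarrow> card {t \<in> S. x \<in> F t s} = 1"
    using count by blast+
  have "(\<lambda>(s, t). F s t) ` filled_cells S F = {F s t |s t. s \<in> S \<and> t \<in> S \<and> F s t \<noteq> {}}"
    "(\<lambda>(s, t). {s, t}) ` cross_pairs S P = {{s, t} |s t. s \<in> S \<and> t \<in> S \<and> \<not> (\<exists>p\<in>P. s \<in> p \<and> t \<in> p)}"
    by (auto simp: filled_cells_def cross_pairs_def same_part_def)
  with pairs show "(\<lambda>(s, t). F s t) ` filled_cells S F = (\<lambda>(s, t). {s, t}) ` cross_pairs S P"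
    by simp
qed

lemma room_frame_transpose:
  assumes rf: "room_frame S P F"
  shows "room_frame S P (\<lambda>s t. F t s)"
  unfolding room_frame_def
proof (intro conjI ballI)
  show "finite S" "partition_on S P"
    using rf by (fact room_frame_finite room_frame_partition)+
  show "F t s = {} \<or> F t s \<subseteq> S \<and> card (F t s) = 2" if "s \<in> S" "t \<in> S" for s t
    using room_frame_cell[OF rf that(2,1)] by blast
  show "F t s = {}" if "p \<in> P" "s \<in> p" "t \<in> p" for p s t
    using room_frame_same_part_empty[OF rf] that by (auto simp: same_part_def)
  show "card {t \<in> S. x \<in> F t s} = 1" "card {t \<in> S. x \<in> F s t} = 1"
    if "p \<in> P" "s \<in> p" "x \<in> S - p" for p s x
    using room_frame_row[OF rf that] room_frame_column[OF rf that] by simp_all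
  have "{F t s |s t. s \<in> S \<and> t \<in> S \<and> F t s \<noteq> {}} = {F s t |s t. s \<in> S \<and> t \<in> S \<and> F s t \<noteq> {}}"
    by blast
  also have "\<dots> = {{s, t} |s t. s \<in> S \<and> t \<in> S \<and> \<not> (\<exists>p\<in>P. s \<in> p \<and> t \<in> p)}"
    using rf unfolding room_frame_def by (elim conjE)
  finally show "{F t s |s t. s \<in> S \<and> t \<in> S \<and> F t s \<noteq> {}} =
      {{s, t} |s t. s \<in> S \<and> t \<in> S \<and> \<not> (\<exists>p\<in>P. s \<in> p \<and> t \<in> p)}" .
qed

lemma skew_frame_transpose: "skew_frame S F \<Longrightarrow> skew_frame S (\<lambda>s t. F t s)"
  by (auto simp: skew_frame_def)

text \<open>Skewness places the filled cells and their transposes disjointly among the cross pairs,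
  while every unordered cross pair is the entry of some filled cell.\<close>

lemma skew_room_frame_filled_cells:
  assumes rf: "room_frame S P F" and sk: "skew_frame S F"
  shows "card (cross_pairs S P) = 2 * card (filled_cells S F)"
    and "inj_on (\<lambda>(s, t). F s t) (filled_cells S F)"
proof -
  let ?\<Phi> = "filled_cells S F" and ?O = "cross_pairs S P"
  have fin: "finite ?\<Phi>" "finite ?O"
    using room_frame_finite[OF rf]
    by (auto intro: finite_subset[of _ "S \<times> S"] simp: filled_cells_def cross_pairs_def)
  have filled_cross: "?\<Phi> \<subseteq> ?O" "prod.swap ` ?\<Phi> \<subseteq> ?O"
    using room_frame_same_part_empty[OF rf]
    by (auto simp: filled_cells_def cross_pairs_def same_part_commute)
  have "?\<Phi> \<inter> prod.swap ` ?\<Phi> = {}"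
  proof (rule equals0I)
    fix p assume "p \<in> ?\<Phi> \<inter> prod.swap ` ?\<Phi>"
    then obtain s t where "(s, t) \<in> ?\<Phi>" "(t, s) \<in> ?\<Phi>"
      by auto
    with sk show False
      unfolding skew_frame_def filled_cells_def by blast
  qed
  then have "card (?\<Phi> \<union> prod.swap ` ?\<Phi>) = 2 * card ?\<Phi>"
    using fin(1) by (simp add: card_Un_disjoint card_image)
  moreover have "card (?\<Phi> \<union> prod.swap ` ?\<Phi>) \<le> card ?O"
    using filled_cross by (intro card_mono[OF fin(2)]) simp
  ultimately have lower: "2 * card ?\<Phi> \<le> card ?O"
    by simp
  have upper: "card ?O \<le> 2 * card ((\<lambda>(s, t). F s t) ` ?\<Phi>)"
    using card_le_twice_card_doubletons[OF fin(2)] room_frame_contents[OF rf] by simp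
  have image: "card ((\<lambda>(s, t). F s t) ` ?\<Phi>) \<le> card ?\<Phi>"
    by (rule card_image_le[OF fin(1)])
  show "card ?O = 2 * card ?\<Phi>"
    using lower upper image by linarith
  have "card ((\<lambda>(s, t). F s t) ` ?\<Phi>) = card ?\<Phi>"
    using lower upper image by linarith
  then show "inj_on (\<lambda>(s, t). F s t) ?\<Phi>"
    using inj_on_iff_eq_card[OF fin(1)] by blast
qed

lemma room_frame_part_of:
  assumes "room_frame S P F" "s \<in> S"
  obtains p where "p \<in> P" "s \<in> p" "p \<subseteq> S"
  using partition_onD1[OF room_frame_partition[OF assms(1)]] assms(2) by blast

lemma room_frame_entry_mem:
  assumes "room_frame S P F" "s \<in> S" "t \<in> S" "x \<in> F s t"
  shows "x \<in> S"
proof -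
  have "F s t \<noteq> {}" using assms(4) by blast
  then show ?thesis
    using room_frame_cell[OF assms(1-3)] assms(4) by blast
qed

lemma room_frame_finite_cell:
  "room_frame S P F \<Longrightarrow> s \<in> S \<Longrightarrow> t \<in> S \<Longrightarrow> finite (F s t)"
  using room_frame_entry_mem[of S P F s t] room_frame_finite[of S P F] finite_subset[of "F s t" S] by blast

lemma room_frame_row_entries:
  assumes rf: "room_frame S P F" and "s \<in> S"
  shows "card (SIGMA t:S. F s t) = 2 * card {t \<in> S. F s t \<noteq> {}}"
proof -
  have fin: "finite S" using room_frame_finite[OF rf] .
  have cell: "t \<in> S \<Longrightarrow> F s t \<noteq> {} \<Longrightarrow> card (F s t) = 2" for t
    using room_frame_cell[OF rf \<open>s \<in> S\<close>] by blast
  have "card (SIGMA t:S. F s t) = (\<Sum>t\<in>S. card (F s t))"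
    using fin room_frame_finite_cell[OF rf \<open>s \<in> S\<close>] by simp
  also have "\<dots> = (\<Sum>t\<in>{t \<in> S. F s t \<noteq> {}}. card (F s t))"
    by (rule sum.mono_neutral_right) (auto simp: fin)
  also have "\<dots> = (\<Sum>t\<in>{t \<in> S. F s t \<noteq> {}}. 2)"
    using cell by (intro sum.cong) auto
  finally show ?thesis by simp
qed

lemma room_frame_row_cross_entries:
  assumes rf: "room_frame S P F" and "s \<in> S"
  shows "card {(t, x). t \<in> S \<and> x \<in> F s t \<and> \<not> same_part P s x} = card {x \<in> S. \<not> same_part P s x}"
proof -
  obtain p where p: "p \<in> P" "s \<in> p" "p \<subseteq> S"
    using room_frame_part_of[OF assms] .
  have part: "{x \<in> S. \<not> same_part P s x} = S - p"
    using same_part_iff_mem[OF room_frame_partition[OF rf] p(1,2)] by blast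
  have "{(t, x). t \<in> S \<and> x \<in> F s t \<and> \<not> same_part P s x} =
      prod.swap ` (SIGMA x:S - p. {t \<in> S. x \<in> F s t})"
    using room_frame_entry_mem[OF rf \<open>s \<in> S\<close>] part by (auto simp: image_iff)
  then have "card {(t, x). t \<in> S \<and> x \<in> F s t \<and> \<not> same_part P s x} =
      (\<Sum>x\<in>S - p. card {t \<in> S. x \<in> F s t})"
    using room_frame_finite[OF rf] by (simp add: card_image)
  also have "\<dots> = card (S - p)"
    using room_frame_row[OF rf p(1,2)] by simp
  finally show ?thesis using part by simp
qed

text \<open>Each row must contain every symbol outside its part, and summed over all rows the filled
  cells provide exactly that many entries; so no row contains a symbol of its own part.\<close>

lemma skew_room_frame_entry_row:
  assumes rf: "room_frame S P F" and sk: "skew_frame S F"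
    and "s \<in> S" "t \<in> S" "x \<in> F s t"
  shows "\<not> same_part P s x"
proof -
  define occ where "occ r = (SIGMA t:S. F r t)" for r
  define cross_occ where "cross_occ r = {(t, x). t \<in> S \<and> x \<in> F r t \<and> \<not> same_part P r x}" for r
  have fin: "finite S" using room_frame_finite[OF rf] .
  have sub: "cross_occ r \<subseteq> occ r" for r
    by (auto simp: occ_def cross_occ_def)
  have fin_occ: "finite (occ r)" if "r \<in> S" for r
    using fin room_frame_finite_cell[OF rf that] by (simp add: occ_def)
  have "cross_pairs S P = (SIGMA r:S. {x \<in> S. \<not> same_part P r x})"
    by (auto simp: cross_pairs_def)
  then have "(\<Sum>r\<in>S. card (cross_occ r)) = card (cross_pairs S P)"
    using fin room_frame_row_cross_entries[OF rf] by (simp add: cross_occ_def)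
  also have "\<dots> = 2 * card (filled_cells S F)"
    using skew_room_frame_filled_cells(1)[OF rf sk] .
  also have "\<dots> = (\<Sum>r\<in>S. card (occ r))"
  proof -
    have "filled_cells S F = (SIGMA r:S. {t \<in> S. F r t \<noteq> {}})"
      by (auto simp: filled_cells_def)
    then show ?thesis
      using fin room_frame_row_entries[OF rf] by (simp add: occ_def sum_distrib_left)
  qed
  finally have "card (cross_occ s) = card (occ s)"
    using sum_mono_inv[where f = "\<lambda>r. card (cross_occ r)" and g = "\<lambda>r. card (occ r)"]
      card_mono[OF fin_occ sub] fin \<open>s \<in> S\<close>
    by blast
  then have "cross_occ s = occ s"
    using card_subset_eq[OF fin_occ[OF \<open>s \<in> S\<close>] sub] by blast
  moreover have "(t, x) \<in> occ s"
    using assms(4,5) by (simp add: occ_def)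
  ultimately show ?thesis
    by (auto simp: cross_occ_def)
qed

lemma skew_room_frame_entry_column:
  assumes "room_frame S P F" "skew_frame S F" "s \<in> S" "t \<in> S" "x \<in> F s t"
  shows "\<not> same_part P t x"
  using skew_room_frame_entry_row[OF room_frame_transpose[OF assms(1)] skew_frame_transpose[OF assms(2)] assms(4,3)]
    assms(5) by simp

lemma room_frame_filled_cross:
  assumes "room_frame S P F" "F s t \<noteq> {}"
  shows "\<not> same_part P s t"
  using room_frame_same_part_empty[OF assms(1)] assms(2) by blast

lemma room_frame_cell_doubleton:
  assumes rf: "room_frame S P F" and "s \<in> S" "t \<in> S" "F s t \<noteq> {}"
  obtains a b where "F s t = {a, b}" "\<not> same_part P a b"
proof -
  have "F s t \<in> (\<lambda>(s, t). F s t) ` filled_cells S F"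
    by (rule rev_image_eqI[of "(s, t)"]) (simp_all add: filled_cells_def assms)
  then obtain a b where "(a, b) \<in> cross_pairs S P" "F s t = {a, b}"
    unfolding room_frame_contents[OF rf] by auto
  then show ?thesis
    by (intro that) (auto simp: cross_pairs_def)
qed

lemma skew_room_frame_cell_symbols:
  assumes rf: "room_frame S P F" and sk: "skew_frame S F"
    and st: "s \<in> S" "t \<in> S" "F s t \<noteq> {}"
    and xy: "x \<in> insert s (insert t (F s t))" "y \<in> insert s (insert t (F s t))"
  shows "same_part P x y \<longleftrightarrow> x = y"
proof
  have "x \<in> S"
    using xy(1) room_frame_entry_mem[OF rf st(1,2)] st(1,2) by blast
  then show "x = y \<Longrightarrow> same_part P x y"
    using same_part_refl[OF room_frame_partition[OF rf]] by simp
  obtain a b where ab: "F s t = {a, b}" "\<not> same_part P a b"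
    using room_frame_cell_doubleton[OF rf st] by blast
  have "\<not> same_part P s t"
    using room_frame_filled_cross[OF rf st(3)] .
  moreover have "\<not> same_part P s a" "\<not> same_part P s b" "\<not> same_part P t a" "\<not> same_part P t b"
    using skew_room_frame_entry_row[OF rf sk st(1,2)] skew_room_frame_entry_column[OF rf sk st(1,2)] ab(1)
    by simp_all
  ultimately show "same_part P x y \<Longrightarrow> x = y"
    using xy ab(2) unfolding ab(1) by (auto simp: same_part_commute)
qed

lemma skew_room_frame_cell_distinct:
  assumes rf: "room_frame S P F" and sk: "skew_frame S F"
    and st: "s \<in> S" "t \<in> S" "F s t \<noteq> {}"
  shows "s \<noteq> t" "s \<notin> F s t" "t \<notin> F s t"
proof -
  have "same_part P s s" "same_part P t t"
    using same_part_refl[OF room_frame_partition[OF rf]] st(1,2) by simp_all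
  then show "s \<noteq> t" "s \<notin> F s t" "t \<notin> F s t"
    using room_frame_filled_cross[OF rf st(3)]
      skew_room_frame_entry_row[OF rf sk st(1,2), of s] skew_room_frame_entry_column[OF rf sk st(1,2), of t]
    by auto
qed

lemma skew_room_frame_row_unique:
  assumes rf: "room_frame S P F" and sk: "skew_frame S F"
    and "s \<in> S" "t \<in> S" "t' \<in> S" "x \<in> F s t" "x \<in> F s t'"
  shows "t = t'"
proof -
  obtain p where p: "p \<in> P" "s \<in> p" "p \<subseteq> S"
    using room_frame_part_of[OF rf \<open>s \<in> S\<close>] .
  have "x \<notin> p"
    using skew_room_frame_entry_row[OF rf sk assms(3,4,6)]
      same_part_iff_mem[OF room_frame_partition[OF rf] p(1,2)] by simp
  moreover have "x \<in> S"
    using room_frame_entry_mem[OF rf assms(3,4,6)] .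
  ultimately have "card {r \<in> S. x \<in> F s r} = 1"
    using room_frame_row[OF rf p(1,2)] by simp
  then obtain r where "{r \<in> S. x \<in> F s r} = {r}"
    by (rule card_1_singletonE)
  then have "t = r" "t' = r"
    using assms(4-7) by blast+
  then show ?thesis by simp
qed

lemma skew_room_frame_column_unique:
  assumes "room_frame S P F" "skew_frame S F"
    and "s \<in> S" "s' \<in> S" "t \<in> S" "x \<in> F s t" "x \<in> F s' t"
  shows "s = s'"
  using skew_room_frame_row_unique[OF room_frame_transpose[OF assms(1)] skew_frame_transpose[OF assms(2)]
      assms(5,3,4)] assms(6,7) by simp

lemma skew_room_frame_cells_share_one_entry:
  assumes rf: "room_frame S P F" and sk: "skew_frame S F"
    and cells: "(s, t) \<in> filled_cells S F" "(s', t') \<in> filled_cells S F" "(s, t) \<noteq> (s', t')"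
    and xy: "x \<in> F s t \<inter> F s' t'" "y \<in> F s t \<inter> F s' t'"
  shows "x = y"
proof (rule ccontr)
  assume "x \<noteq> y"
  have "card (F s t) = 2" "card (F s' t') = 2"
    using cells(1,2) room_frame_cell[OF rf] by (auto simp: filled_cells_def)
  then have "F s t = {x, y}" "F s' t' = {x, y}"
    using xy \<open>x \<noteq> y\<close> by (simp_all add: card_2_eq_doubleton)
  then show False
    using inj_onD[OF skew_room_frame_filled_cells(2)[OF rf sk] _ cells(1,2)] cells(3) by simp
qed

lemma card_cross_pairs_uniform:
  assumes part: "partition_on S P" and "finite S" and ut: "uniform_type P n m"
  shows "card (cross_pairs S P) = (n * m) * (n * m - n)"
proof -
  have parts: "card p = n" if "p \<in> P" for p
    using ut that by (simp add: uniform_type_def)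
  have "card S = (\<Sum>p\<in>P. card p)"
    using part \<open>finite S\<close> by (intro product_partition) (auto intro: finite_subset dest: partition_onD1)
  then have card_S: "card S = n * m"
    using parts ut by (simp add: uniform_type_def)
  have "card {x \<in> S. \<not> same_part P s x} = n * m - n" if s: "s \<in> S" for s
  proof -
    obtain p where p: "p \<in> P" "s \<in> p"
      using partition_onD1[OF part] s by blast
    then have "{x \<in> S. \<not> same_part P s x} = S - p"
      using same_part_iff_mem[OF part p] by blast
    moreover have "p \<subseteq> S"
      using partition_onD1[OF part] p(1) by blast
    ultimately show ?thesis
      using card_S parts[OF p(1)] \<open>finite S\<close> by (simp add: card_Diff_subset finite_subset)
  qed
  moreover have "cross_pairs S P = (SIGMA s:S. {x \<in> S. \<not> same_part P s x})"
    by (auto simp: cross_pairs_def)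
  ultimately show ?thesis
    using \<open>finite S\<close> card_S by simp
qed

section \<open>Ternary codes\<close>

definition word_support :: "('a \<Rightarrow> nat) \<Rightarrow> 'a set" where
  "word_support c = {p. c p \<noteq> 0}"

lemma hamming_eq_card_supports:
  assumes "finite X" "word_support c \<subseteq> X" "word_support c' \<subseteq> X"
  defines "A \<equiv> word_support c" and "B \<equiv> word_support c'"
  shows "hamming X c c' = card (A - B) + card (B - A) + card {p \<in> A \<inter> B. c p \<noteq> c' p}"
proof -
  have fin: "finite A" "finite B"
    using assms(1-3) finite_subset unfolding A_def B_def by blast+
  have "{p \<in> X. c p \<noteq> c' p} = ((A - B) \<union> (B - A)) \<union> {p \<in> A \<inter> B. c p \<noteq> c' p}"
    using assms(2,3) unfolding A_def B_def word_support_def by auto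
  moreover have "card ((A - B) \<union> (B - A)) = card (A - B) + card (B - A)"
    by (rule card_Un_disjoint) (use fin in auto)
  moreover have "card (((A - B) \<union> (B - A)) \<union> {p \<in> A \<inter> B. c p \<noteq> c' p}) =
      card ((A - B) \<union> (B - A)) + card {p \<in> A \<inter> B. c p \<noteq> c' p}"
    by (rule card_Un_disjoint) (use fin in auto)
  ultimately show ?thesis
    by (simp add: hamming_def)
qed

lemma six_le_hamming_of_weight_four:
  assumes X: "finite X" "word_support c \<subseteq> X" "word_support c' \<subseteq> X"
    and weight: "card (word_support c) = 4" "card (word_support c') = 4"
    and common: "card (word_support c \<inter> word_support c') \<le> 1 \<or>
      card (word_support c \<inter> word_support c') \<le> 2 \<and>
      (\<forall>p \<in> word_support c \<inter> word_support c'. c p \<noteq> c' p)"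
  shows "6 \<le> hamming X c c'"
proof -
  let ?A = "word_support c" and ?B = "word_support c'"
  have fin: "finite ?A" "finite ?B"
    using X finite_subset by blast+
  have "card (?A - ?B) = 4 - card (?A \<inter> ?B)" "card (?B - ?A) = 4 - card (?A \<inter> ?B)"
    using weight fin by (simp_all add: card_Diff_subset_Int Int_commute)
  moreover have "card (?A \<inter> ?B) \<le> 4"
    using weight card_mono[OF fin(1), of "?A \<inter> ?B"] by simp
  moreover have "{p \<in> ?A \<inter> ?B. c p \<noteq> c' p} = ?A \<inter> ?B"
    if "\<forall>p \<in> ?A \<inter> ?B. c p \<noteq> c' p"
    using that by blast
  ultimately show ?thesis
    using hamming_eq_card_supports[OF X] common by auto
qed

text \<open>Transport of words along an injection of the points; the code is built on symbol \<times> level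
  \<times> bool and moved to natural numbers along \<open>to_nat\<close>.\<close>

definition relabel :: "('a \<Rightarrow> 'b) \<Rightarrow> 'a set \<Rightarrow> ('a \<Rightarrow> nat) \<Rightarrow> 'b \<Rightarrow> nat" where
  "relabel e X c y = (if y \<in> e ` X then c (inv_into X e y) else 0)"

lemma relabel_image:
  "inj_on e X \<Longrightarrow> x \<in> X \<Longrightarrow> relabel e X c (e x) = c x"
  by (simp add: relabel_def)

lemma relabel_Collect:
  assumes "inj_on e X" "A \<subseteq> X"
  shows "{y \<in> e ` A. R (relabel e X c y) (relabel e X c' y)} = e ` {x \<in> A. R (c x) (c' x)}"
  using assms by (auto simp: relabel_image subset_iff)

lemma relabel_ternary_word:
  assumes "inj_on e X" "ternary_word X c"
  shows "ternary_word (e ` X) (relabel e X c)"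
  using assms(2) by (simp add: ternary_word_def relabel_def)

lemma relabel_inj_on:
  assumes "inj_on e X" "\<forall>c\<in>C. ternary_word X c"
  shows "inj_on (relabel e X) C"
proof (rule inj_onI, rule ext)
  fix c c' x assume cc': "c \<in> C" "c' \<in> C" "relabel e X c = relabel e X c'"
  show "c x = c' x"
  proof (cases "x \<in> X")
    case True
    then show ?thesis
      using fun_cong[OF cc'(3), of "e x"] relabel_image[OF assms(1) True] by metis
  next
    case False
    have "ternary_word X c" "ternary_word X c'"
      using assms(2) cc'(1,2) by blast+
    with False show ?thesis
      by (simp add: ternary_word_def)
  qed
qed

lemma gdc_relabel:
  assumes gdc: "gdc w1 w2 d X G C" and e: "inj_on e X"
  shows "gdc w1 w2 d (e ` X) ((`) e ` G) (relabel e X ` C)"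
proof -
  from gdc obtain fin: "finite X" and part: "partition_on X G"
    and words: "\<forall>c\<in>C. ternary_word X c \<and> has_composition X c w1 w2"
    and dist: "\<forall>c\<in>C. \<forall>c'\<in>C. c \<noteq> c' \<longrightarrow> d \<le> hamming X c c'"
    and group: "\<forall>c\<in>C. \<forall>g\<in>G. card {x \<in> g. c x \<noteq> 0} \<le> 1"
    unfolding gdc_def by (elim conjE) (rule that)
  have sub: "g \<subseteq> X" if "g \<in> G" for g
    using partition_onD1[OF part] that by blast
  have card_Collect: "card {y \<in> e ` A. R (relabel e X c y) (relabel e X c' y)} = card {x \<in> A. R (c x) (c' x)}"
    if "A \<subseteq> X" for A R c c'
    using relabel_Collect[OF e that] card_image inj_on_subset[OF e] that
    by (metis (no_types, lifting) mem_Collect_eq subsetI subset_trans)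
  have "(`) e ` G - {{}} = (`) e ` G"
    using partition_onD3[OF part] by auto
  then have "partition_on (e ` X) ((`) e ` G)"
    using partition_on_inj_image[OF part e] by simp
  moreover have "ternary_word (e ` X) c' \<and> has_composition (e ` X) c' w1 w2" if "c' \<in> relabel e X ` C" for c'
    using that words relabel_ternary_word[OF e] card_Collect[of X "\<lambda>a b. a = 1"] card_Collect[of X "\<lambda>a b. a = 2"]
    by (auto simp: has_composition_def)
  moreover have "d \<le> hamming (e ` X) c1 c2"
    if c12: "c1 \<in> relabel e X ` C" "c2 \<in> relabel e X ` C" "c1 \<noteq> c2" for c1 c2
  proof -
    obtain c c' where "c \<in> C" "c' \<in> C" "c1 = relabel e X c" "c2 = relabel e X c'"
      using c12(1,2) by blast
    moreover from this have "c \<noteq> c'"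
      using c12(3) by blast
    ultimately show ?thesis
      using dist card_Collect[of X "(\<noteq>)"] by (simp add: hamming_def)
  qed
  moreover have "card {y \<in> g'. c' y \<noteq> 0} \<le> 1" if "c' \<in> relabel e X ` C" "g' \<in> (`) e ` G" for c' g'
    using that group sub card_Collect[of _ "\<lambda>a b. a \<noteq> 0"] by fastforce
  ultimately show ?thesis
    using fin by (simp add: gdc_def)
qed

lemma uniform_type_image:
  assumes "partition_on X G" "inj_on e X" "uniform_type G n m"
  shows "uniform_type ((`) e ` G) n m"
proof -
  have "inj_on ((`) e) G"
    using assms(2) partition_onD1[OF assms(1)] by (simp add: inj_on_image)
  moreover have "card (e ` g) = card g" if "g \<in> G" for g
    using assms(1,2) that by (intro card_image) (auto intro: inj_on_subset dest: partition_onD1)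
  ultimately show ?thesis
    using assms(3) by (simp add: uniform_type_def card_image)
qed

section \<open>The code of a skew Room frame\<close>

text \<open>A level in Z_3 is a natural number below 3, its successor is \<open>Suc u mod 3\<close>.\<close>

definition head_points :: "'a \<Rightarrow> 'a \<Rightarrow> nat \<Rightarrow> bool \<Rightarrow> ('a \<times> nat \<times> bool) set" where
  "head_points s t u h = {(s, u, h), (t, u, \<not> h)}"

definition entry_points :: "'a set \<Rightarrow> nat \<Rightarrow> bool \<Rightarrow> ('a \<times> nat \<times> bool) set" where
  "entry_points E u g = (\<lambda>x. (x, Suc u mod 3, g)) ` E"

definition cell_word :: "('a \<Rightarrow> 'a \<Rightarrow> 'a set) \<Rightarrow> 'a \<Rightarrow> 'a \<Rightarrow> nat \<Rightarrow> bool \<Rightarrow> bool \<Rightarrow> 'a \<times> nat \<times> bool \<Rightarrow> nat" where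
  "cell_word F s t u h g p =
    (if p \<in> head_points s t u h then (if h = g then 2 else 1)
     else if p \<in> entry_points (F s t) u g then (if h = g then 1 else 2)
     else 0)"

lemma word_support_cell_word:
  "word_support (cell_word F s t u h g) = head_points s t u h \<union> entry_points (F s t) u g"
  by (auto simp: word_support_def cell_word_def)

lemma head_entry_points_disjoint:
  "u < 3 \<Longrightarrow> head_points s t u h \<inter> entry_points E u g = {}"
  using Suc_mod_3_neq[of u] by (auto simp: head_points_def entry_points_def)

lemma cell_word_head:
  "p \<in> head_points s t u h \<Longrightarrow> cell_word F s t u h g p = (if h = g then 2 else 1)"
  by (simp add: cell_word_def)

lemma cell_word_entry:
  "u < 3 \<Longrightarrow> p \<in> entry_points (F s t) u g \<Longrightarrow> cell_word F s t u h g p = (if h = g then 1 else 2)"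
  using head_entry_points_disjoint[of u s t h "F s t" g] by (auto simp: cell_word_def)

lemma card_head_points: "card (head_points s t u h) = 2"
  by (simp add: head_points_def)

lemma card_entry_points: "card (entry_points E u g) = card E"
  unfolding entry_points_def by (rule card_image) (simp add: inj_on_def)

lemma cell_word_code_word:
  assumes "u < 3" "card (F s t) = 2" "word_support (cell_word F s t u h g) \<subseteq> X"
  shows "ternary_word X (cell_word F s t u h g) \<and> has_composition X (cell_word F s t u h g) 2 2"
proof -
  let ?w = "cell_word F s t u h g"
  have "{p \<in> X. ?w p = 1} = (if h = g then entry_points (F s t) u g else head_points s t u h)"
    "{p \<in> X. ?w p = 2} = (if h = g then head_points s t u h else entry_points (F s t) u g)"
    using assms(3) head_entry_points_disjoint[OF assms(1), of s t h "F s t" g]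
    by (auto simp: word_support_cell_word cell_word_def)
  moreover have "ternary_word X ?w"
    using assms(3) by (auto simp: ternary_word_def word_support_def cell_word_def)
  ultimately show ?thesis
    using assms(2) by (simp add: has_composition_def card_head_points card_entry_points)
qed

lemma cell_word_weight:
  assumes "u < 3" "card (F s t) = 2"
  shows "card (word_support (cell_word F s t u h g)) = 4"
proof -
  have "finite (F s t)"
    using assms(2) by (simp add: card_ge_0_finite)
  then have "card (head_points s t u h \<union> entry_points (F s t) u g) =
      card (head_points s t u h) + card (entry_points (F s t) u g)"
    using head_entry_points_disjoint[OF assms(1)]
    by (intro card_Un_disjoint) (simp_all add: head_points_def entry_points_def)
  then show ?thesis
    using assms(2) by (simp add: word_support_cell_word card_head_points card_entry_points)
qed

lemma cell_word_support_inj_fst: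
  assumes "s \<noteq> t" "s \<notin> F s t" "t \<notin> F s t"
  shows "inj_on fst (word_support (cell_word F s t u h g))"
  using assms by (auto simp: inj_on_def word_support_cell_word head_points_def entry_points_def)

lemma cell_word_meets_part_once:
  assumes symbols: "\<And>x y. x \<in> insert s (insert t (F s t)) \<Longrightarrow> y \<in> insert s (insert t (F s t)) \<Longrightarrow>
      same_part P x y \<Longrightarrow> x = y"
    and distinct: "s \<noteq> t" "s \<notin> F s t" "t \<notin> F s t"
    and "q \<in> P"
  shows "card {p \<in> q \<times> {..<3} \<times> UNIV. cell_word F s t u h g p \<noteq> 0} \<le> 1"
proof -
  let ?W = "word_support (cell_word F s t u h g)"
  let ?Q = "{p \<in> q \<times> {..<3} \<times> UNIV. cell_word F s t u h g p \<noteq> 0}"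
  have "p1 = p2" if "p1 \<in> ?Q" "p2 \<in> ?Q" for p1 p2
  proof -
    have in_W: "p1 \<in> ?W" "p2 \<in> ?W" "fst p1 \<in> q" "fst p2 \<in> q"
      using that by (auto simp: word_support_def mem_Times_iff)
    then have "fst p1 \<in> insert s (insert t (F s t))" "fst p2 \<in> insert s (insert t (F s t))"
      by (auto simp: word_support_cell_word head_points_def entry_points_def)
    moreover have "same_part P (fst p1) (fst p2)"
      using in_W(3,4) \<open>q \<in> P\<close> by (auto simp: same_part_def)
    ultimately have "fst p1 = fst p2"
      by (rule symbols)
    then show ?thesis
      using inj_onD[OF cell_word_support_inj_fst[of s t F u h g, OF distinct]] in_W(1,2) by blast
  qed
  then show ?thesis
    unfolding card_le_one_iff_all_eq by blast
qed

lemma cell_words_adjacent_levels: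
  assumes "u < 3" "u' = Suc u mod 3"
  shows "word_support (cell_word F s t u h g) \<inter> word_support (cell_word F s' t' u' h' g')
    \<subseteq> {if h' = g then (s', u', h') else (t', u', \<not> h')}"
proof -
  have "u' \<noteq> u" "Suc u' mod 3 \<noteq> u" "Suc u' mod 3 \<noteq> Suc u mod 3"
    using assms by presburger+
  then show ?thesis
    using assms(2) by (auto simp: word_support_cell_word head_points_def entry_points_def)
qed

lemma cell_words_same_level_Int:
  assumes "u < 3"
  shows "word_support (cell_word F s t u h g) \<inter> word_support (cell_word F s' t' u h' g') =
    (head_points s t u h \<inter> head_points s' t' u h') \<union> (entry_points (F s t) u g \<inter> entry_points (F s' t') u g')"
  using head_entry_points_disjoint[OF assms, of s t h "F s' t'" g']
    head_entry_points_disjoint[OF assms, of s' t' h' "F s t" g]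
  unfolding word_support_cell_word by blast

lemma cell_words_same_level_values:
  assumes "u < 3"
    and "p \<in> word_support (cell_word F s t u h g) \<inter> word_support (cell_word F s' t' u h' g')"
  shows "cell_word F s t u h g p = cell_word F s' t' u h' g' p \<longleftrightarrow> (h = g) = (h' = g')"
proof -
  consider "p \<in> head_points s t u h" "p \<in> head_points s' t' u h'"
    | "p \<in> entry_points (F s t) u g" "p \<in> entry_points (F s' t') u g'"
    using assms(2) unfolding cell_words_same_level_Int[OF assms(1)] by blast
  then show ?thesis
  proof cases
    case 1
    then show ?thesis
      by (simp add: cell_word_head)
  next
    case 2
    then show ?thesis
      by (simp add: cell_word_entry[OF assms(1)])
  qed
qed

lemma entry_points_Int:
  "entry_points E u g \<inter> entry_points E' u g' = (if g = g' then entry_points (E \<inter> E') u g else {})"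
  by (auto simp: entry_points_def)

lemma cell_words_same_cell:
  assumes "u < 3" "s \<noteq> t" "card (F s t) = 2" "(h, g) \<noteq> (h', g')"
  defines "I \<equiv> word_support (cell_word F s t u h g) \<inter> word_support (cell_word F s t u h' g')"
  shows "card I \<le> 1 \<or> card I \<le> 2 \<and> (\<forall>p\<in>I. cell_word F s t u h g p \<noteq> cell_word F s t u h' g' p)"
proof -
  have I: "I = (head_points s t u h \<inter> head_points s t u h') \<union> (entry_points (F s t) u g \<inter> entry_points (F s t) u g')"
    unfolding I_def by (rule cell_words_same_level_Int[OF assms(1)])
  consider "h = h'" "g \<noteq> g'" | "h \<noteq> h'" "g = g'" | "h \<noteq> h'" "g \<noteq> g'"
    using assms(4) by blast
  then show ?thesis
  proof cases
    case 1
    then have "I \<subseteq> head_points s t u h"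
      unfolding I entry_points_Int by simp
    then have "card I \<le> 2"
      using card_mono[of "head_points s t u h" I] by (simp add: card_head_points head_points_def)
    moreover have "\<forall>p\<in>I. cell_word F s t u h g p \<noteq> cell_word F s t u h' g' p"
      using 1 cell_words_same_level_values[OF assms(1), of _ F s t h g s t h' g'] unfolding I_def by auto
    ultimately show ?thesis
      by blast
  next
    case 2
    then have "I \<subseteq> entry_points (F s t) u g"
      using assms(2) unfolding I by (auto simp: head_points_def)
    moreover have "finite (entry_points (F s t) u g)"
      using assms(3) by (simp add: card_ge_0_finite entry_points_def)
    ultimately have "card I \<le> 2"
      using card_mono assms(3) by (fastforce simp: card_entry_points)
    moreover have "\<forall>p\<in>I. cell_word F s t u h g p \<noteq> cell_word F s t u h' g' p"
      using 2 cell_words_same_level_values[OF assms(1), of _ F s t h g s t h' g'] unfolding I_def by auto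
    ultimately show ?thesis
      by blast
  next
    case 3
    then have "I = {}"
      using assms(2) unfolding I entry_points_Int by (auto simp: head_points_def)
    then show ?thesis by simp
  qed
qed

lemma skew_room_frame_card_common_entries:
  assumes rf: "room_frame S P F" and sk: "skew_frame S F"
    and c: "(s, t) \<in> filled_cells S F" "(s', t') \<in> filled_cells S F" "(s, t) \<noteq> (s', t')"
  shows "card (entry_points (F s t) u g \<inter> entry_points (F s' t') u g') \<le> 1"
proof (cases "g = g'")
  case True
  have "card (F s t \<inter> F s' t') \<le> 1"
    unfolding card_le_one_iff_all_eq
    using skew_room_frame_cells_share_one_entry[OF rf sk c] by blast
  then show ?thesis
    using True by (simp add: entry_points_Int card_entry_points)
qed (simp add: entry_points_Int)

lemma skew_room_frame_cell_words_parallel: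
  assumes rf: "room_frame S P F" and sk: "skew_frame S F"
    and c: "(s, t) \<in> filled_cells S F" "(s', t') \<in> filled_cells S F" "(s, t) \<noteq> (s', t')"
    and "u < 3"
  shows "card (word_support (cell_word F s t u h g) \<inter> word_support (cell_word F s' t' u h g)) \<le> 1"
proof -
  let ?H = "head_points s t u h \<inter> head_points s' t' u h"
  let ?E = "entry_points (F s t) u g \<inter> entry_points (F s' t') u g"
  have I: "word_support (cell_word F s t u h g) \<inter> word_support (cell_word F s' t' u h g) = ?H \<union> ?E"
    by (rule cell_words_same_level_Int[OF \<open>u < 3\<close>])
  have S: "s \<in> S" "t \<in> S" "s' \<in> S" "t' \<in> S"
    using c(1,2) by (auto simp: filled_cells_def)
  consider "s = s'" | "t = t'" | "s \<noteq> s'" "t \<noteq> t'"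
    by blast
  then show ?thesis
  proof cases
    case 1
    then have "F s t \<inter> F s' t' = {}"
      using skew_room_frame_row_unique[OF rf sk S(1,2,4)] c(3) by blast
    moreover have "?H \<subseteq> {(s, u, h)}"
      using 1 c(3) by (auto simp: head_points_def)
    ultimately show ?thesis
      unfolding I by (intro card_le_one_if_subset_singleton) (auto simp: entry_points_Int entry_points_def)
  next
    case 2
    then have "F s t \<inter> F s' t' = {}"
      using skew_room_frame_column_unique[OF rf sk S(1,3,2)] c(3) by blast
    moreover have "?H \<subseteq> {(t, u, \<not> h)}"
      using 2 c(3) by (auto simp: head_points_def)
    ultimately show ?thesis
      unfolding I by (intro card_le_one_if_subset_singleton) (auto simp: entry_points_Int entry_points_def)
  next
    case 3
    then have "?H = {}"
      by (auto simp: head_points_def)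
    then show ?thesis
      unfolding I using skew_room_frame_card_common_entries[OF rf sk c] by simp
  qed
qed

lemma skew_room_frame_cell_words_other_cell:
  fixes h g h' g' :: bool
  assumes rf: "room_frame S P F" and sk: "skew_frame S F"
    and c: "(s, t) \<in> filled_cells S F" "(s', t') \<in> filled_cells S F" "(s, t) \<noteq> (s', t')"
    and "u < 3"
  defines "w \<equiv> cell_word F s t u h g" and "w' \<equiv> cell_word F s' t' u h' g'"
  defines "I \<equiv> word_support w \<inter> word_support w'"
  shows "card I \<le> 1 \<or> card I \<le> 2 \<and> (\<forall>p\<in>I. w p \<noteq> w' p)"
proof -
  let ?H = "head_points s t u h \<inter> head_points s' t' u h'"
  let ?E = "entry_points (F s t) u g \<inter> entry_points (F s' t') u g'"
  have I: "I = ?H \<union> ?E"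
    unfolding I_def w_def w'_def by (rule cell_words_same_level_Int[OF \<open>u < 3\<close>])
  have differ: "\<forall>p\<in>I. w p \<noteq> w' p" if "(h = g) \<noteq> (h' = g')"
    using that cell_words_same_level_values[OF \<open>u < 3\<close>, of _ F s t h g s' t' h' g']
    unfolding I_def w_def w'_def by auto
  have "\<not> (s = t' \<and> t = s')"
    using sk c(1,2) by (auto simp: skew_frame_def filled_cells_def)
  then have crossed: "?H \<subseteq> {if s = t' then (s, u, h) else (t, u, \<not> h)}" if "h \<noteq> h'"
    using that by (auto simp: head_points_def)
  consider "h = h'" "g = g'" | "h = h'" "g \<noteq> g'" | "h \<noteq> h'" "g \<noteq> g'" | "h \<noteq> h'" "g = g'"
    by blast
  then show ?thesis
  proof cases
    case 1
    then show ?thesis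
      using skew_room_frame_cell_words_parallel[OF rf sk c \<open>u < 3\<close>] unfolding I_def w_def w'_def by simp
  next
    case 2
    then have "I \<subseteq> head_points s t u h"
      unfolding I entry_points_Int by simp
    then have "card I \<le> 2"
      using card_mono[of "head_points s t u h" I] by (simp add: card_head_points head_points_def)
    then show ?thesis
      using differ 2 by simp
  next
    case 3
    then have "I \<subseteq> {if s = t' then (s, u, h) else (t, u, \<not> h)}"
      unfolding I entry_points_Int using crossed by simp
    then have "card I \<le> 1"
      by (rule card_le_one_if_subset_singleton)
    then show ?thesis ..
  next
    case 4
    have "card I \<le> card ?H + card ?E"
      unfolding I by (rule card_Un_le)
    also have "\<dots> \<le> 1 + 1"
      using card_le_one_if_subset_singleton[OF crossed[OF 4(1)]]
        skew_room_frame_card_common_entries[OF rf sk c] by (rule add_mono)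
    finally have "card I \<le> 2"
      by simp
    moreover have "(h = g) \<noteq> (h' = g')"
      using 4 by blast
    ultimately show ?thesis
      using differ by blast
  qed
qed

lemma room_frame_cell_word_support:
  assumes rf: "room_frame S P F" and "(s, t) \<in> filled_cells S F" "u < 3"
  shows "word_support (cell_word F s t u h g) \<subseteq> S \<times> {..<3} \<times> UNIV"
  using assms room_frame_entry_mem[OF rf, of s t] Suc_mod_3_neq
  by (auto simp: filled_cells_def word_support_cell_word head_points_def entry_points_def)

lemma room_frame_cell_word_weight:
  assumes rf: "room_frame S P F" and "(s, t) \<in> filled_cells S F" "u < 3"
  shows "card (word_support (cell_word F s t u h g)) = 4"
  using assms room_frame_cell[OF rf, of s t] by (intro cell_word_weight) (auto simp: filled_cells_def)

lemma skew_room_frame_cell_words_common_points: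
  assumes rf: "room_frame S P F" and sk: "skew_frame S F"
    and c: "(s, t) \<in> filled_cells S F" "(s', t') \<in> filled_cells S F" and u: "u < 3" "u' < 3"
    and ne: "((s, t), u, h, g) \<noteq> ((s', t'), u', h', g')"
  defines "I \<equiv> word_support (cell_word F s t u h g) \<inter> word_support (cell_word F s' t' u' h' g')"
  shows "card I \<le> 1 \<or> card I \<le> 2 \<and> (\<forall>p\<in>I. cell_word F s t u h g p \<noteq> cell_word F s' t' u' h' g' p)"
proof -
  have "u' = Suc u mod 3 \<or> u = Suc u' mod 3 \<or> u = u'"
    using u by presburger
  then consider "u' = Suc u mod 3" | "u = Suc u' mod 3" | "u = u'" "(s, t) = (s', t')"
    | "u = u'" "(s, t) \<noteq> (s', t')"
    by blast
  then show ?thesis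
  proof cases
    case 1
    have "card I \<le> 1"
      unfolding I_def by (rule card_le_one_if_subset_singleton[OF cell_words_adjacent_levels[OF u(1) 1]])
    then show ?thesis ..
  next
    case 2
    have "I = word_support (cell_word F s' t' u' h' g') \<inter> word_support (cell_word F s t u h g)"
      unfolding I_def by (rule Int_commute)
    then have "card I \<le> 1"
      using card_le_one_if_subset_singleton[OF cell_words_adjacent_levels[OF u(2) 2]] by simp
    then show ?thesis ..
  next
    case 3
    then have eq: "u' = u" "s' = s" "t' = t"
      by auto
    have st: "s \<in> S" "t \<in> S" "F s t \<noteq> {}"
      using c(1) by (simp_all add: filled_cells_def)
    have card: "card (F s t) = 2"
      using room_frame_cell[OF rf st] by simp
    have "(h, g) \<noteq> (h', g')"
      using ne 3 by auto
    from cell_words_same_cell[of u s t F h g h' g', OF u(1) skew_room_frame_cell_distinct(1)[OF rf sk st] card this]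
    show ?thesis
      unfolding I_def eq .
  next
    case 4
    then show ?thesis
      using skew_room_frame_cell_words_other_cell[OF rf sk c 4(2) u(1)] unfolding I_def by simp
  qed
qed

lemma skew_room_frame_cell_words_distance:
  assumes rf: "room_frame S P F" and sk: "skew_frame S F"
    and c: "(s, t) \<in> filled_cells S F" "(s', t') \<in> filled_cells S F" and u: "u < 3" "u' < 3"
    and ne: "((s, t), u, h, g) \<noteq> ((s', t'), u', h', g')"
  shows "6 \<le> hamming (S \<times> {..<3} \<times> UNIV) (cell_word F s t u h g) (cell_word F s' t' u' h' g')"
proof (rule six_le_hamming_of_weight_four)
  show "finite (S \<times> {..<3::nat} \<times> (UNIV :: bool set))"
    using room_frame_finite[OF rf] by simp
  show "word_support (cell_word F s t u h g) \<subseteq> S \<times> {..<3} \<times> UNIV"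
    "word_support (cell_word F s' t' u' h' g') \<subseteq> S \<times> {..<3} \<times> UNIV"
    using room_frame_cell_word_support[OF rf] c u by blast+
  show "card (word_support (cell_word F s t u h g)) = 4" "card (word_support (cell_word F s' t' u' h' g')) = 4"
    using room_frame_cell_word_weight[OF rf] c u by blast+
qed (rule skew_room_frame_cell_words_common_points[OF rf sk c u ne])

definition room_frame_code :: "'a set \<Rightarrow> ('a \<Rightarrow> 'a \<Rightarrow> 'a set) \<Rightarrow> ('a \<times> nat \<times> bool \<Rightarrow> nat) set" where
  "room_frame_code S F =
    (\<lambda>((s, t), u, h, g). cell_word F s t u h g) ` (filled_cells S F \<times> {..<3} \<times> UNIV)"

lemma card_room_frame_code:
  assumes rf: "room_frame S P F" and sk: "skew_frame S F"
  shows "card (room_frame_code S F) = 12 * card (filled_cells S F)"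
proof -
  let ?J = "filled_cells S F \<times> {..<3::nat} \<times> (UNIV :: (bool \<times> bool) set)"
  have "inj_on (\<lambda>((s, t), u, h, g). cell_word F s t u h g) ?J"
  proof (rule inj_onI, rule ccontr)
    fix i j assume ij: "i \<in> ?J" "j \<in> ?J" "i \<noteq> j"
      and eq: "(\<lambda>((s, t), u, h, g). cell_word F s t u h g) i = (\<lambda>((s, t), u, h, g). cell_word F s t u h g) j"
    obtain s t u h g where i: "i = ((s, t), u, h, g)"
      by (metis prod.exhaust)
    obtain s' t' u' h' g' where j: "j = ((s', t'), u', h', g')"
      by (metis prod.exhaust)
    have "6 \<le> hamming (S \<times> {..<3} \<times> UNIV) (cell_word F s t u h g) (cell_word F s' t' u' h' g')"
      using skew_room_frame_cell_words_distance[OF rf sk] ij unfolding i j by simp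
    moreover have "cell_word F s t u h g = cell_word F s' t' u' h' g'"
      using eq unfolding i j by simp
    ultimately show False
      by (simp add: hamming_def)
  qed
  then have "card (room_frame_code S F) = card ?J"
    unfolding room_frame_code_def by (rule card_image)
  also have "\<dots> = card (filled_cells S F) * (3 * 4)"
    by (simp add: card_cartesian_product card_UNIV_bool flip: UNIV_Times_UNIV)
  finally show ?thesis by simp
qed

lemma room_frame_codeE:
  assumes "c \<in> room_frame_code S F"
  obtains s t u h g where "(s, t) \<in> filled_cells S F" "u < 3" "c = cell_word F s t u h g"
  using assms by (auto simp: room_frame_code_def)

lemma room_frame_cell_word_code_word:
  assumes rf: "room_frame S P F" and c: "(s, t) \<in> filled_cells S F" and "u < 3"
  shows "ternary_word (S \<times> {..<3} \<times> UNIV) (cell_word F s t u h g) \<and>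
    has_composition (S \<times> {..<3} \<times> UNIV) (cell_word F s t u h g) 2 2"
  using c room_frame_cell[OF rf, of s t] room_frame_cell_word_support[OF rf c \<open>u < 3\<close>] \<open>u < 3\<close>
  by (intro cell_word_code_word) (auto simp: filled_cells_def)

lemma skew_room_frame_cell_word_meets_part_once:
  assumes rf: "room_frame S P F" and sk: "skew_frame S F"
    and c: "(s, t) \<in> filled_cells S F" and "q \<in> P"
  shows "card {p \<in> q \<times> {..<3} \<times> UNIV. cell_word F s t u h g p \<noteq> 0} \<le> 1"
proof (rule cell_word_meets_part_once)
  have st: "s \<in> S" "t \<in> S" "F s t \<noteq> {}"
    using c by (simp_all add: filled_cells_def)
  show "x = y" if "x \<in> insert s (insert t (F s t))" "y \<in> insert s (insert t (F s t))"
    "same_part P x y" for x y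
    using skew_room_frame_cell_symbols[OF rf sk st that(1,2)] that(3) by simp
  show "s \<noteq> t" "s \<notin> F s t" "t \<notin> F s t"
    by (fact skew_room_frame_cell_distinct[OF rf sk st])+
qed (fact \<open>q \<in> P\<close>)

lemma skew_room_frame_gdc:
  assumes rf: "room_frame S P F" and sk: "skew_frame S F"
  shows "gdc 2 2 6 (S \<times> {..<3} \<times> UNIV) ((\<lambda>p. p \<times> {..<3} \<times> UNIV) ` P) (room_frame_code S F)"
  unfolding gdc_def
proof (intro conjI)
  let ?X = "S \<times> {..<3::nat} \<times> (UNIV :: bool set)"
  show "finite ?X"
    using room_frame_finite[OF rf] by simp
  show "partition_on ?X ((\<lambda>p. p \<times> {..<3} \<times> UNIV) ` P)"
    by (rule partition_on_Times[OF room_frame_partition[OF rf]]) (simp add: lessThan_empty_iff)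
  show "\<forall>c\<in>room_frame_code S F. ternary_word ?X c \<and> has_composition ?X c 2 2"
    using room_frame_cell_word_code_word[OF rf] by (auto elim: room_frame_codeE)
  show "\<forall>c\<in>room_frame_code S F. \<forall>g\<in>(\<lambda>p. p \<times> {..<3} \<times> UNIV) ` P. card {x \<in> g. c x \<noteq> 0} \<le> 1"
    using skew_room_frame_cell_word_meets_part_once[OF rf sk] by (auto elim: room_frame_codeE)
  show "\<forall>c\<in>room_frame_code S F. \<forall>c'\<in>room_frame_code S F. c \<noteq> c' \<longrightarrow> 6 \<le> hamming ?X c c'"
  proof (intro ballI impI)
    fix c c' assume cc': "c \<in> room_frame_code S F" "c' \<in> room_frame_code S F" "c \<noteq> c'"
    obtain s t u h g where c: "(s, t) \<in> filled_cells S F" "u < 3" "c = cell_word F s t u h g"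
      using cc'(1) by (rule room_frame_codeE)
    obtain s' t' u' h' g' where c': "(s', t') \<in> filled_cells S F" "u' < 3" "c' = cell_word F s' t' u' h' g'"
      using cc'(2) by (rule room_frame_codeE)
    have "((s, t), u, h, g) \<noteq> ((s', t'), u', h', g')"
      using cc'(3) c(3) c'(3) by auto
    then show "6 \<le> hamming ?X c c'"
      using skew_room_frame_cell_words_distance[OF rf sk c(1) c'(1) c(2) c'(2)] c(3) c'(3) by simp
  qed
qed

lemma card_room_frame_code_uniform:
  assumes rf: "room_frame S P F" and sk: "skew_frame S F" and ut: "uniform_type P t u"
  shows "card (room_frame_code S F) = 6 * t ^ 2 * u * (u - 1)"
proof -
  have "card (room_frame_code S F) = 6 * ((t * u) * (t * u - t))"
    using card_room_frame_code[OF rf sk] skew_room_frame_filled_cells(1)[OF rf sk]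
      card_cross_pairs_uniform[OF room_frame_partition[OF rf] room_frame_finite[OF rf] ut] by simp
  also have "\<dots> = 6 * t ^ 2 * u * (u - 1)"
    by (simp add: power2_eq_square diff_mult_distrib2 algebra_simps)
  finally show ?thesis .
qed

lemma uniform_type_room_frame_groups:
  assumes "room_frame S P F" "uniform_type P t u"
  shows "uniform_type ((\<lambda>p. p \<times> {..<3::nat} \<times> (UNIV :: bool set)) ` P) (6 * t) u"
  using uniform_type_Times[OF assms(2) room_frame_partition[OF assms(1)], of "{..<3::nat} \<times> (UNIV :: bool set)"]
  by (simp add: card_cartesian_product card_UNIV_bool lessThan_empty_iff mult.commute)

theorem mainTheorem5:
  fixes t u :: nat
  assumes "\<exists>(S :: nat set) P F. room_frame S P F \<and> skew_frame S F \<and> uniform_type P t u"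
  shows "\<exists>(X :: nat set) G C. gdc 2 2 6 X G C \<and> uniform_type G (6 * t) u \<and>
           card C = 6 * t ^ 2 * u * (u - 1)"
proof -
  obtain S :: "nat set" and P F where rf: "room_frame S P F" and sk: "skew_frame S F"
    and ut: "uniform_type P t u"
    using assms by blast
  let ?X = "S \<times> {..<3::nat} \<times> (UNIV :: bool set)"
  let ?G = "(\<lambda>p. p \<times> {..<3::nat} \<times> (UNIV :: bool set)) ` P"
  let ?C = "room_frame_code S F"
  have gdc: "gdc 2 2 6 ?X ?G ?C"
    by (rule skew_room_frame_gdc[OF rf sk])
  then have part: "partition_on ?X ?G" and words: "\<forall>c\<in>?C. ternary_word ?X c"
    by (simp_all add: gdc_def)
  show ?thesis
  proof (intro exI conjI)
    show "gdc 2 2 6 (to_nat ` ?X) ((`) to_nat ` ?G) (relabel to_nat ?X ` ?C)"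
      by (rule gdc_relabel[OF gdc inj_on_to_nat])
    show "uniform_type ((`) to_nat ` ?G) (6 * t) u"
      by (rule uniform_type_image[OF part inj_on_to_nat uniform_type_room_frame_groups[OF rf ut]])
    show "card (relabel to_nat ?X ` ?C) = 6 * t ^ 2 * u * (u - 1)"
      using card_image[OF relabel_inj_on[OF inj_on_to_nat words]] card_room_frame_code_uniform[OF rf sk ut]
      by simp
  qed
qed

end
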